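(* Let $n\ge2$ and let $\mathsf r=[r_1,\dots,r_{2n-2}]$ be a tree-like factorization of $\lambda_n$, written as $r_\ell=(\!(a_{\ell-1},a_\ell)\!)$ for integers $a_0<a_1<\dots<a_{2n-2}$. Then $a_0\equiv a_{2n-2}\equiv 0\pmod n$.
   Context: The affine symmetric group $\widetilde S_n$ is the group, under composition, of bijections $w:\mathbb Z\to\mathbb Z$ with $w(i+n)=w(i)+n$ and $\sum_{i=1}^n w(i)=\binom{n+1}{2}$. For $i\not\equiv j\pmod n$, $(\!(i,j)\!)$ is the affine reflection interchanging $i+kn$ and $j+kn$ for all $k\in\mathbb Z$; $(\!(i,j)\!)=(\!(j,i)\!)=(\!(i+kn,j+kn)\!)$. Let $\lambda_n$ be the element with $\lambda_n(k)=k+n$ for $k\not\equiv 0\pmod n$ and $\lambda_n(k)=k-n(n-1)$ for $k\equiv0\pmod n$; its reflection length (minimal number of reflections with product $\lambda_n$) is $2n-2$. $\textsc{fact}(\lambda_n)$ is the set of sequences $[r_1,\dots,r_{2n-2}]$ of reflections with $r_1r_2\cdots r_{2n-2}=\lambda_n$. Such a sequence is tree-like if one can write $r_k=(\!(a_{k-1},b_k)\!)$ with integers $a_{k-1}<b_k$ ($1\le k\le 2n-2$) such that $a_k\equiv b_k\pmod n$ ($1\le k\le 2n-3$); equivalently, after shifting representatives by multiples of $n$, there are integers $a_0<a_1<\dots<a_{2n-2}$ with $r_\ell=(\!(a_{\ell-1},a_\ell)\!)$ for all $\ell$. *)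

theory Defs
  imports Main
begin

text \<open>Affine permutations are modelled as functions int \<Rightarrow> int; the group
operation is composition, so the product r1 r2 ... rk is r1 \<circ> r2 \<circ> ... \<circ> rk.\<close>

definition aff_refl :: "nat \<Rightarrow> int \<Rightarrow> int \<Rightarrow> (int \<Rightarrow> int)" where
  "aff_refl n i j = (\<lambda>x. if x mod int n = i mod int n then x + (j - i)
                         else if x mod int n = j mod int n then x - (j - i)
                         else x)"

definition is_reflection :: "nat \<Rightarrow> (int \<Rightarrow> int) \<Rightarrow> bool" where
  "is_reflection n r \<longleftrightarrow> (\<exists>i j. i mod int n \<noteq> j mod int n \<and> r = aff_refl n i j)"

definition lambda_n :: "nat \<Rightarrow> int \<Rightarrow> int" where
  "lambda_n n = (\<lambda>k. if k mod int n \<noteq> 0 then k + int n else k - int n * (int n - 1))"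

definition list_prod :: "(int \<Rightarrow> int) list \<Rightarrow> (int \<Rightarrow> int)" where
  "list_prod rs = foldr (\<circ>) rs id"

definition fact_lambda :: "nat \<Rightarrow> (int \<Rightarrow> int) list set" where
  "fact_lambda n = {rs. length rs = 2 * n - 2 \<and> (\<forall>r\<in>set rs. is_reflection n r)
                        \<and> list_prod rs = lambda_n n}"

end

theory Submission
  imports Defs
begin

text \<open>Each factor ((a(l-1), a(l))) sends a(l) to a(l-1), so the product \<lambda>n sends
a(2n-2) to a(0) < a(2n-2). But \<lambda>n moves an integer downwards only if it is a
multiple of n, and then by n(n-1); hence both a(2n-2) and a(0) are multiples of n.\<close>

lemma aff_refl_left: "aff_refl n i j i = j"
  by (simp add: aff_refl_def)

lemma aff_refl_right:
  assumes "i mod int n \<noteq> j mod int n"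
  shows "aff_refl n i j j = i"
  using assms by (simp add: aff_refl_def)

lemma aff_refl_congruent:
  assumes "i mod int n = j mod int n" "x mod int n = i mod int n"
  shows "aff_refl n i j x = x + (j - i)"
  using assms by (simp add: aff_refl_def)

lemma is_reflection_involution:
  assumes "is_reflection n r"
  shows "r (r x) = x"
proof -
  obtain i j where ij: "i mod int n \<noteq> j mod int n" and r: "r = aff_refl n i j"
    using assms unfolding is_reflection_def by blast
  have "(x + (j - i)) mod int n = j mod int n" if "x mod int n = i mod int n"
    using mod_add_cong[OF that refl, of "j - i"] by simp
  moreover have "(x - (j - i)) mod int n = i mod int n" if "x mod int n = j mod int n"
    using mod_diff_cong[OF that refl, of "j - i"] by simp
  ultimately show ?thesis
    using ij unfolding r aff_refl_def by auto
qed

text \<open>For congruent i \<noteq> j, aff_refl n i j translates the class of i, so it is no involution.\<close>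

lemma is_reflection_aff_refl_noncongruent:
  assumes "is_reflection n (aff_refl n i j)" "i \<noteq> j"
  shows "i mod int n \<noteq> j mod int n"
proof
  assume cong: "i mod int n = j mod int n"
  have "aff_refl n i j (aff_refl n i j i) = j + (j - i)"
    using cong by (simp only: aff_refl_left aff_refl_congruent)
  moreover have "aff_refl n i j (aff_refl n i j i) = i"
    using is_reflection_involution[OF assms(1)] .
  ultimately show False
    using \<open>i \<noteq> j\<close> by linarith
qed

lemma is_reflection_aff_refl_right:
  assumes "is_reflection n (aff_refl n i j)" "i \<noteq> j"
  shows "aff_refl n i j j = i"
  using aff_refl_right is_reflection_aff_refl_noncongruent[OF assms] .

lemma list_prod_snoc: "list_prod (xs @ [y]) = list_prod xs \<circ> y"
  by (induction xs) (auto simp: list_prod_def)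

lemma list_prod_chain:
  assumes "\<And>l. l < length rs \<Longrightarrow> (rs ! l) (a (Suc l)) = a l"
  shows "list_prod rs (a (length rs)) = a 0"
  using assms
proof (induction rs rule: rev_induct)
  case Nil
  then show ?case by (simp add: list_prod_def)
next
  case (snoc r rs)
  have "list_prod rs (a (length rs)) = a 0"
    using snoc.prems by (intro snoc.IH) (metis length_append_singleton less_SucI nth_append_left)
  moreover have "r (a (Suc (length rs))) = a (length rs)"
    using snoc.prems[of "length rs"] by simp
  ultimately show ?case
    by (simp add: list_prod_snoc)
qed

lemma lambda_n_nonmultiple: "k mod int n \<noteq> 0 \<Longrightarrow> lambda_n n k = k + int n"
  unfolding lambda_n_def by (rule if_P)

lemma lambda_n_multiple: "k mod int n = 0 \<Longrightarrow> lambda_n n k = k - int n * (int n - 1)"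
  unfolding lambda_n_def by (rule if_not_P) simp

lemma lambda_n_decreasing_imp_multiple:
  assumes "lambda_n n k < k"
  shows "k mod int n = 0" "lambda_n n k mod int n = 0"
proof -
  show k: "k mod int n = 0"
  proof (rule ccontr)
    assume "k mod int n \<noteq> 0"
    then have "lambda_n n k = k + int n"
      by (rule lambda_n_nonmultiple)
    with assms show False
      by linarith
  qed
  then have "int n dvd k - int n * (int n - 1)"
    by (auto intro!: dvd_diff)
  then show "lambda_n n k mod int n = 0"
    unfolding lambda_n_multiple[OF k] by (rule dvd_imp_mod_0)
qed

theorem corollary3p5:
  fixes n :: nat and rs :: "(int \<Rightarrow> int) list" and a :: "nat \<Rightarrow> int"
  assumes "n \<ge> 2"
    and "rs \<in> fact_lambda n"
    and "\<And>l. l < 2 * n - 2 \<Longrightarrow> a l < a (Suc l)"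
    and "\<And>l. 1 \<le> l \<Longrightarrow> l \<le> 2 * n - 2 \<Longrightarrow> rs ! (l - 1) = aff_refl n (a (l - 1)) (a l)"
  shows "a 0 mod int n = 0 \<and> a (2 * n - 2) mod int n = 0"
proof -
  define m where "m = 2 * n - 2"
  have len: "length rs = m" and reflections: "\<forall>r\<in>set rs. is_reflection n r"
    and prod: "list_prod rs = lambda_n n"
    using assms(2) by (auto simp: fact_lambda_def m_def)
  have "(rs ! l) (a (Suc l)) = a l" if "l < length rs" for l
  proof -
    have "rs ! l = aff_refl n (a l) (a (Suc l))"
      using assms(4)[of "Suc l"] that len m_def by simp
    moreover have "is_reflection n (rs ! l)" and "a l < a (Suc l)"
      using reflections that len assms(3) m_def by auto
    ultimately show ?thesis
      by (metis is_reflection_aff_refl_right less_irrefl)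
  qed
  then have "list_prod rs (a (length rs)) = a 0"
    by (rule list_prod_chain)
  then have a0: "lambda_n n (a m) = a 0"
    by (simp only: len prod)
  have "a 0 < a m"
    by (rule lift_Suc_mono_less_ivl[where N = "{..<m}"]) (use assms(1,3) in \<open>auto simp: m_def\<close>)
  then have "lambda_n n (a m) < a m"
    by (simp only: a0)
  then have "a m mod int n = 0" "a 0 mod int n = 0"
    unfolding a0[symmetric] by (rule lambda_n_decreasing_imp_multiple)+
  then show ?thesis
    unfolding m_def by blast
qed

end
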